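(* Let $n\ge 2$ and let $V$ be an $n$-element subset of $\mathbb R$ that is optimal for $3$-term arithmetic progressions. Then at least one of the two $(n-1)$-element sets $V\setminus\{\min V\}$ and $V\setminus\{\max V\}$ is optimal for $3$-term arithmetic progressions.
   Context: A $k$-term arithmetic progression is a set $\{a,a+d,\dots,a+(k-1)d\}\subseteq\mathbb R$ with $d>0$; $S_{\mathcal A_k}(V)$ is the number of $k$-term arithmetic progressions contained in $V$. An $m$-set $V$ is optimal for $k$-term arithmetic progressions if $S_{\mathcal A_k}(V)$ equals the maximum of $S_{\mathcal A_k}(W)$ over all $m$-subsets $W\subseteq\mathbb R$, namely $(m-r)(m+r-k+1)/(2k-2)$ where $r$ is the remainder of $m$ modulo $k-1$. *)

theory Defs
  imports Main "HOL.Real"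
begin

definition is_kAP :: "nat \<Rightarrow> real set \<Rightarrow> bool" where
  "is_kAP k P \<longleftrightarrow> (\<exists>a d. d > 0 \<and> P = {a + real i * d | i. i < k})"

definition S_AP :: "nat \<Rightarrow> real set \<Rightarrow> nat" where
  "S_AP k V = card {P. is_kAP k P \<and> P \<subseteq> V}"

definition optimal_AP :: "nat \<Rightarrow> real set \<Rightarrow> bool" where
  "optimal_AP k V \<longleftrightarrow> finite V \<and>
     (\<forall>W. finite W \<and> card W = card V \<longrightarrow> S_AP k W \<le> S_AP k V)"

end

theory Submission
  imports Defs
begin

text \<open>
  Count 3-term progressions by their middle term \<open>b\<close>: such a progression is determined by
  its left end, so there are at most \<open>min(#{below b}, #{above b})\<close> of them.
  Summing over the ranks of the elements gives a bound depending only on \<open>card V\<close>, attained by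
  \<open>{0, \<dots>, n - 1}\<close>; hence \<open>V\<close> is optimal iff every \<open>b \<in> V\<close> attains its minimum.
  Deleting \<open>Min V\<close> changes nothing at centres with more elements above than below, so it can
  only destroy optimality at a centre \<open>b\<close> with more elements below, one of whose progressions
  starts at \<open>Min V\<close>. As \<open>b\<close> attains its minimum, reflection in \<open>b\<close> maps the left ends onto
  all elements above \<open>b\<close>, which forces \<open>Max V = 2b - Min V\<close>.
  By the symmetry \<open>x \<mapsto> -x\<close>, deleting \<open>Max V\<close> can only fail if the same midpoint of
  \<open>Min V\<close> and \<open>Max V\<close> has more elements above than below, so both deletions cannot fail.
\<close>

definition elems_below :: "real set \<Rightarrow> real \<Rightarrow> real set" where
  "elems_below V b = {a \<in> V. a < b}"

definition elems_above :: "real set \<Rightarrow> real \<Rightarrow> real set" where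
  "elems_above V b = {c \<in> V. b < c}"

definition ap3_left_ends :: "real set \<Rightarrow> real \<Rightarrow> real set" where
  "ap3_left_ends V b = {a \<in> V. a < b \<and> 2 * b - a \<in> V}"

definition ap3_bound :: "nat \<Rightarrow> nat" where
  "ap3_bound n = (\<Sum>i<n. min i (n - 1 - i))"

lemma is_kAP_uminus_image:
  assumes "is_kAP k P"
  shows "is_kAP k (uminus ` P)"
proof -
  obtain a d where d: "d > 0" and P: "P = {a + real i * d | i. i < k}"
    using assms unfolding is_kAP_def by blast
  define a' where "a' = - a - real (k - 1) * d"
  have flip: "- (a + real i * d) = a' + real (k - 1 - i) * d" if "i < k" for i
    using that by (simp add: a'_def algebra_simps)
  have "uminus ` P = {a' + real i * d | i. i < k}"
  proof (intro equalityI subsetI)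
    fix x assume "x \<in> uminus ` P"
    then obtain i where "i < k" "x = - (a + real i * d)" unfolding P by blast
    then show "x \<in> {a' + real i * d | i. i < k}"
      using flip by (intro CollectI exI[of _ "k - 1 - i"]) auto
  next
    fix x assume "x \<in> {a' + real i * d | i. i < k}"
    then obtain j where j: "j < k" "x = a' + real j * d" by blast
    then have "x = - (a + real (k - 1 - j) * d)" using flip[of "k - 1 - j"] by simp
    moreover have "a + real (k - 1 - j) * d \<in> P"
      unfolding P using j(1) by (intro CollectI exI[of _ "k - 1 - j"]) simp
    ultimately show "x \<in> uminus ` P" by blast
  qed
  then show ?thesis
    unfolding is_kAP_def using d by blast
qed

lemma S_AP_uminus_image: "S_AP k (uminus ` V) = S_AP k V"
proof -
  have inv: "uminus ` uminus ` X = X" for X :: "real set"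
    by (simp add: image_image)
  have "{P. is_kAP k P \<and> P \<subseteq> uminus ` V} = (\<lambda>P. uminus ` P) ` {P. is_kAP k P \<and> P \<subseteq> V}"
  proof (intro equalityI subsetI)
    fix P assume "P \<in> {P. is_kAP k P \<and> P \<subseteq> uminus ` V}"
    then have "uminus ` P \<in> {P. is_kAP k P \<and> P \<subseteq> V}"
      using is_kAP_uminus_image[of k P] image_mono[of P "uminus ` V" uminus] by (simp add: inv)
    then show "P \<in> (\<lambda>P. uminus ` P) ` {P. is_kAP k P \<and> P \<subseteq> V}"
      using inv[of P] by (metis image_eqI)
  qed (auto intro: is_kAP_uminus_image)
  moreover have "inj_on (\<lambda>P. uminus ` P) X" for X :: "real set set"
    by (metis inj_onI inv)
  ultimately show ?thesis
    unfolding S_AP_def by (simp add: card_image)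
qed

lemma optimal_AP_uminus_image:
  assumes "optimal_AP k V"
  shows "optimal_AP k (uminus ` V)"
  unfolding optimal_AP_def
proof (intro conjI allI impI)
  show "finite (uminus ` V)" using assms by (simp add: optimal_AP_def)
  fix W :: "real set" assume W: "finite W \<and> card W = card (uminus ` V)"
  then have "card (uminus ` W) = card V"
    by (simp add: card_image)
  then have "S_AP k (uminus ` W) \<le> S_AP k V"
    using assms W by (simp add: optimal_AP_def)
  then show "S_AP k W \<le> S_AP k (uminus ` V)"
    by (simp add: S_AP_uminus_image)
qed

lemma optimal_AP_uminus_image_iff: "optimal_AP k (uminus ` V) \<longleftrightarrow> optimal_AP k V"
  using optimal_AP_uminus_image[of k "uminus ` V"] optimal_AP_uminus_image[of k V]
  by (auto simp: image_image)

lemma Min_uminus_image: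
  fixes V :: "real set"
  assumes "finite V" "V \<noteq> {}"
  shows "Min (uminus ` V) = - Max V"
  using assms by (intro Min_eqI) auto

lemma Max_uminus_image:
  fixes V :: "real set"
  assumes "finite V" "V \<noteq> {}"
  shows "Max (uminus ` V) = - Min V"
  using assms by (intro Max_eqI) auto

lemma card_elems_above_uminus_image:
  "card (elems_above (uminus ` V) (- b)) = card (elems_below V b)"
proof -
  have "elems_above (uminus ` V) (- b) = uminus ` elems_below V b"
    by (auto simp: elems_above_def elems_below_def image_iff)
  then show ?thesis by (simp add: card_image)
qed

lemma card_elems_below_uminus_image:
  "card (elems_below (uminus ` V) (- b)) = card (elems_above V b)"
proof -
  have "elems_below (uminus ` V) (- b) = uminus ` elems_above V b"
    by (auto simp: elems_above_def elems_below_def image_iff)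
  then show ?thesis by (simp add: card_image)
qed

subsection \<open>Counting 3-term progressions by their middle term\<close>

lemma is_kAP_3_iff: "is_kAP 3 P \<longleftrightarrow> (\<exists>a b. a < b \<and> P = {a, b, 2 * b - a})"
proof -
  have three: "{a + real i * d | i. i < (3::nat)} = {a, a + d, 2 * (a + d) - a}" for a d
  proof -
    have "{a + real i * d | i. i < (3::nat)} = (\<lambda>i. a + real i * d) ` {..<3}" by auto
    also have "{..<3::nat} = {0, 1, 2}" by auto
    finally show ?thesis by (simp add: algebra_simps)
  qed
  show ?thesis
  proof
    assume "is_kAP 3 P"
    then obtain a d where "d > 0" "P = {a, a + d, 2 * (a + d) - a}"
      unfolding is_kAP_def three by blast
    then show "\<exists>a b. a < b \<and> P = {a, b, 2 * b - a}"
      by (intro exI[of _ a] exI[of _ "a + d"]) simp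
  next
    assume "\<exists>a b. a < b \<and> P = {a, b, 2 * b - a}"
    then obtain a b where "a < b" "P = {a, a + (b - a), 2 * (a + (b - a)) - a}" by auto
    then show "is_kAP 3 P"
      unfolding is_kAP_def three by (intro exI[of _ a] exI[of _ "b - a"]) simp
  qed
qed

lemma S_AP_3_eq_sum_card_ap3_left_ends:
  assumes "finite V"
  shows "S_AP 3 V = (\<Sum>b\<in>V. card (ap3_left_ends V b))"
proof -
  define g where "g = (\<lambda>(b::real, a::real). {a, b, 2 * b - a})"
  have inj: "inj_on g (Sigma V (ap3_left_ends V))"
  proof (rule inj_onI)
    fix x y assume "x \<in> Sigma V (ap3_left_ends V)" "y \<in> Sigma V (ap3_left_ends V)"
      and eq: "g x = g y"
    then obtain b a b' a' where xy: "x = (b, a)" "y = (b', a')" and lt: "a < b" "a' < b'"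
      by (auto simp: ap3_left_ends_def)
    from eq have same: "{a, b, 2 * b - a} = {a', b', 2 * b' - a'}" by (simp add: g_def xy)
    have "a \<in> {a', b', 2 * b' - a'}" "a' \<in> {a, b, 2 * b - a}" using same by blast+
    then have "a = a'" using lt by auto
    moreover have "2 * b - a \<in> {a', b', 2 * b' - a'}" "2 * b' - a' \<in> {a, b, 2 * b - a}"
      using same by blast+
    ultimately show "x = y" using lt xy by auto
  qed
  have "g ` Sigma V (ap3_left_ends V) = {P. is_kAP 3 P \<and> P \<subseteq> V}"
  proof (intro equalityI subsetI)
    fix P assume "P \<in> g ` Sigma V (ap3_left_ends V)"
    then show "P \<in> {P. is_kAP 3 P \<and> P \<subseteq> V}"
      by (auto simp: g_def ap3_left_ends_def is_kAP_3_iff; blast)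
  next
    fix P assume "P \<in> {P. is_kAP 3 P \<and> P \<subseteq> V}"
    then obtain a b where "a < b" "P = g (b, a)" "(b, a) \<in> Sigma V (ap3_left_ends V)"
      by (auto simp: is_kAP_3_iff g_def ap3_left_ends_def)
    then show "P \<in> g ` Sigma V (ap3_left_ends V)" by blast
  qed
  then have "S_AP 3 V = card (Sigma V (ap3_left_ends V))"
    unfolding S_AP_def using card_image[OF inj] by simp
  also have "\<dots> = (\<Sum>b\<in>V. card (ap3_left_ends V b))"
    using assms by (intro card_SigmaI) (auto simp: ap3_left_ends_def)
  finally show ?thesis .
qed

lemma bij_betw_card_elems_below:
  assumes "finite V"
  shows "bij_betw (\<lambda>b. card (elems_below V b)) V {..<card V}"
proof -
  have mono: "card (elems_below V b) < card (elems_below V b')"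
    if "b \<in> V" "b < b'" for b b'
    using assms that by (intro psubset_card_mono) (auto simp: elems_below_def)
  have inj: "inj_on (\<lambda>b. card (elems_below V b)) V"
    by (rule inj_onI) (metis linorder_neq_iff mono less_irrefl)
  have "card (elems_below V b) < card V" if "b \<in> V" for b
    using assms that by (intro psubset_card_mono) (auto simp: elems_below_def)
  then have "(\<lambda>b. card (elems_below V b)) ` V \<subseteq> {..<card V}" by auto
  moreover have "card ((\<lambda>b. card (elems_below V b)) ` V) = card {..<card V}"
    using card_image[OF inj] by simp
  ultimately have "(\<lambda>b. card (elems_below V b)) ` V = {..<card V}"
    by (intro card_subset_eq) auto
  then show ?thesis using inj by (simp add: bij_betw_def)
qed

lemma card_elems_above:
  assumes "finite V" "b \<in> V"
  shows "card (elems_above V b) = card V - 1 - card (elems_below V b)"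
proof -
  have "elems_above V b = (V - {b}) - elems_below V b"
    by (auto simp: elems_above_def elems_below_def)
  moreover have "elems_below V b \<subseteq> V - {b}"
    by (auto simp: elems_below_def)
  ultimately show ?thesis
    using assms by (simp add: card_Diff_subset finite_subset)
qed

lemma sum_min_card_elems_below_above:
  assumes "finite V"
  shows "(\<Sum>b\<in>V. min (card (elems_below V b)) (card (elems_above V b))) = ap3_bound (card V)"
proof -
  have "(\<Sum>b\<in>V. min (card (elems_below V b)) (card (elems_above V b)))
      = (\<Sum>b\<in>V. (\<lambda>i. min i (card V - 1 - i)) (card (elems_below V b)))"
    using assms by (intro sum.cong) (auto simp: card_elems_above)
  also have "\<dots> = (\<Sum>i<card V. min i (card V - 1 - i))"
    using bij_betw_card_elems_below[OF assms] by (rule sum.reindex_bij_betw)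
  finally show ?thesis unfolding ap3_bound_def .
qed

lemma card_ap3_left_ends_le:
  assumes "finite V"
  shows "card (ap3_left_ends V b) \<le> min (card (elems_below V b)) (card (elems_above V b))"
proof -
  have "card (ap3_left_ends V b) \<le> card (elems_below V b)"
    using assms by (intro card_mono) (auto simp: ap3_left_ends_def elems_below_def)
  moreover have "card ((\<lambda>a. 2 * b - a) ` ap3_left_ends V b) \<le> card (elems_above V b)"
    using assms by (intro card_mono) (auto simp: ap3_left_ends_def elems_above_def)
  then have "card (ap3_left_ends V b) \<le> card (elems_above V b)"
    by (simp add: card_image inj_on_def)
  ultimately show ?thesis by simp
qed

lemma S_AP_3_le_ap3_bound:
  assumes "finite V"
  shows "S_AP 3 V \<le> ap3_bound (card V)"
  unfolding S_AP_3_eq_sum_card_ap3_left_ends[OF assms]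
    sum_min_card_elems_below_above[OF assms, symmetric]
  using card_ap3_left_ends_le[OF assms] by (rule sum_mono)

lemma ap3_bound_le_S_AP_3:
  assumes "finite V"
    and "\<And>b. b \<in> V \<Longrightarrow> min (card (elems_below V b)) (card (elems_above V b))
                         \<le> card (ap3_left_ends V b)"
  shows "ap3_bound (card V) \<le> S_AP 3 V"
  unfolding S_AP_3_eq_sum_card_ap3_left_ends[OF assms(1)]
    sum_min_card_elems_below_above[OF assms(1), symmetric]
  using assms(2) by (rule sum_mono)

lemma ap3_bound_le_S_AP_3_lessThan: "ap3_bound n \<le> S_AP 3 (real ` {..<n})"
proof -
  define I where "I = real ` {..<n}"
  have "min (card (elems_below I b)) (card (elems_above I b)) \<le> card (ap3_left_ends I b)"
    if "b \<in> I" for b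
  proof -
    obtain k where k: "k < n" "b = real k" using \<open>b \<in> I\<close> by (auto simp: I_def)
    have "elems_below I b = real ` {..<k}"
      using k by (auto simp: elems_below_def I_def)
    then have below: "card (elems_below I b) = k" by (simp add: card_image)
    have above: "card (elems_above I b) = n - 1 - k"
      using card_elems_above[of I b] below \<open>b \<in> I\<close> by (simp add: I_def card_image)
    define t where "t = min k (n - 1 - k)"
    \<comment> \<open>the left ends \<open>k - t, \<dots>, k - 1\<close> are reflected to \<open>k + 1, \<dots>, k + t \<le> n - 1\<close>\<close>
    have "real ` {k - t..<k} \<subseteq> ap3_left_ends I b"
    proof
      fix a assume "a \<in> real ` {k - t..<k}"
      then obtain j where j: "k - t \<le> j" "j < k" "a = real j" by auto
      have "2 * b - a = real (2 * k - j)" "2 * k - j < n"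
        using j k t_def by auto
      then have "2 * b - a \<in> I"
        unfolding I_def by (metis imageI lessThan_iff)
      then show "a \<in> ap3_left_ends I b"
        using j k by (auto simp: ap3_left_ends_def I_def)
    qed
    then have "card (real ` {k - t..<k}) \<le> card (ap3_left_ends I b)"
      by (intro card_mono) (auto simp: ap3_left_ends_def I_def)
    then show ?thesis by (simp add: below above card_image t_def)
  qed
  then have "ap3_bound (card I) \<le> S_AP 3 I"
    by (intro ap3_bound_le_S_AP_3) (auto simp: I_def)
  then show ?thesis by (simp add: I_def card_image)
qed

lemma optimal_AP_3_iff: "optimal_AP 3 V \<longleftrightarrow> finite V \<and> S_AP 3 V = ap3_bound (card V)"
proof
  assume opt: "optimal_AP 3 V"
  then have "S_AP 3 (real ` {..<card V}) \<le> S_AP 3 V"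
    by (simp add: optimal_AP_def card_image)
  then show "finite V \<and> S_AP 3 V = ap3_bound (card V)"
    using opt ap3_bound_le_S_AP_3_lessThan[of "card V"] S_AP_3_le_ap3_bound[of V]
    by (simp add: optimal_AP_def)
qed (auto simp: optimal_AP_def dest: S_AP_3_le_ap3_bound)

lemma card_ap3_left_ends_eq_min_if_optimal:
  assumes "optimal_AP 3 V" "b \<in> V"
  shows "card (ap3_left_ends V b) = min (card (elems_below V b)) (card (elems_above V b))"
proof -
  have fin: "finite V" using assms(1) by (simp add: optimal_AP_def)
  show ?thesis
  proof (rule sum_mono_inv[OF _ _ assms(2) fin])
    show "(\<Sum>b\<in>V. card (ap3_left_ends V b))
        = (\<Sum>b\<in>V. min (card (elems_below V b)) (card (elems_above V b)))"
      using assms(1) fin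
      by (simp add: optimal_AP_3_iff S_AP_3_eq_sum_card_ap3_left_ends sum_min_card_elems_below_above)
  qed (use card_ap3_left_ends_le[OF fin] in auto)
qed

lemma optimal_AP_3_Diff_Min:
  assumes opt: "optimal_AP 3 V" and "V \<noteq> {}"
    and Min_not_left_end: "\<And>b. \<lbrakk>b \<in> V; card (elems_above V b) < card (elems_below V b)\<rbrakk>
                     \<Longrightarrow> Min V \<notin> ap3_left_ends V b"
  shows "optimal_AP 3 (V - {Min V})"
proof -
  have fin: "finite V" using opt by (simp add: optimal_AP_def)
  define W where "W = V - {Min V}"
  have "min (card (elems_below W b)) (card (elems_above W b)) \<le> card (ap3_left_ends W b)"
    if "b \<in> W" for b
  proof -
    have b: "b \<in> V" "Min V < b"
      using that Min_le[OF fin, of b] by (auto simp: W_def)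
    have "elems_below W b = elems_below V b - {Min V}" "Min V \<in> elems_below V b"
      using b fin \<open>V \<noteq> {}\<close> by (auto simp: elems_below_def W_def)
    then have below: "card (elems_below W b) = card (elems_below V b) - 1"
      and below_pos: "card (elems_below V b) > 0"
      using fin by (auto simp: elems_below_def card_gt_0_iff)
    have above: "elems_above W b = elems_above V b"
      using b by (auto simp: elems_above_def W_def)
    have "ap3_left_ends W b = ap3_left_ends V b - {Min V}"
      using b by (auto simp: ap3_left_ends_def W_def)
    then have left_ends: "card (ap3_left_ends W b)
        = card (ap3_left_ends V b) - (if Min V \<in> ap3_left_ends V b then 1 else 0)"
      by (simp add: card_Diff_singleton_if)
    show ?thesis
      using card_ap3_left_ends_eq_min_if_optimal[OF opt b(1)] Min_not_left_end[OF b(1)] below_pos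
      unfolding below above left_ends by (auto simp: min_def)
  qed
  then have "ap3_bound (card W) \<le> S_AP 3 W"
    using fin by (intro ap3_bound_le_S_AP_3) (auto simp: W_def)
  then show ?thesis
    using S_AP_3_le_ap3_bound[of W] fin by (simp add: optimal_AP_3_iff W_def)
qed

lemma Max_eq_reflected_Min:
  assumes opt: "optimal_AP 3 V" and b: "b \<in> V"
    and more_below: "card (elems_above V b) < card (elems_below V b)"
    and Min_left_end: "Min V \<in> ap3_left_ends V b"
  shows "Max V = 2 * b - Min V"
proof -
  have fin: "finite V" using opt by (simp add: optimal_AP_def)
  \<comment> \<open>\<open>b\<close> attains its bound, so reflection in \<open>b\<close> maps the left ends onto everything above \<open>b\<close>\<close>
  have "(\<lambda>a. 2 * b - a) ` ap3_left_ends V b = elems_above V b"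
  proof (rule card_subset_eq)
    show "finite (elems_above V b)" using fin by (simp add: elems_above_def)
    show "(\<lambda>a. 2 * b - a) ` ap3_left_ends V b \<subseteq> elems_above V b"
      by (auto simp: ap3_left_ends_def elems_above_def)
    show "card ((\<lambda>a. 2 * b - a) ` ap3_left_ends V b) = card (elems_above V b)"
      using card_ap3_left_ends_eq_min_if_optimal[OF opt b] more_below
      by (simp add: card_image inj_on_def)
  qed
  moreover have reflected_Min: "2 * b - Min V \<in> V" "Min V < b"
    using Min_left_end by (auto simp: ap3_left_ends_def)
  moreover have "Max V \<in> elems_above V b"
    using reflected_Min Max_ge[OF fin, of "2 * b - Min V"] Max_in[OF fin] b
    by (auto simp: elems_above_def)
  ultimately obtain a where "a \<in> ap3_left_ends V b" "Max V = 2 * b - a"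
    by blast
  moreover have "Min V \<le> a"
    using calculation(1) fin by (simp add: ap3_left_ends_def)
  moreover have "2 * b - Min V \<le> Max V"
    using reflected_Min(1) fin by simp
  ultimately show ?thesis by linarith
qed

lemma more_below_midpoint_if_not_optimal_Diff_Min:
  assumes "optimal_AP 3 V" "V \<noteq> {}" "\<not> optimal_AP 3 (V - {Min V})"
  defines "m \<equiv> (Min V + Max V) / 2"
  shows "card (elems_above V m) < card (elems_below V m)"
proof -
  obtain b where "b \<in> V" "card (elems_above V b) < card (elems_below V b)"
    "Min V \<in> ap3_left_ends V b"
    using assms optimal_AP_3_Diff_Min by blast
  moreover from this have "b = m"
    using Max_eq_reflected_Min[OF assms(1)] by (simp add: m_def)
  ultimately show ?thesis by simp
qed

theorem mainTheorem9:
  fixes V :: "real set" and n :: nat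
  assumes "n \<ge> 2" and "finite V" and "card V = n" and "optimal_AP 3 V"
  shows "optimal_AP 3 (V - {Min V}) \<or> optimal_AP 3 (V - {Max V})"
proof (rule ccontr)
  assume neither: "\<not> ?thesis"
  define m where "m = (Min V + Max V) / 2"
  have ne: "V \<noteq> {}" using assms(1,3) by auto
  have more_below: "card (elems_above V m) < card (elems_below V m)"
    unfolding m_def using more_below_midpoint_if_not_optimal_Diff_Min[OF assms(4) ne] neither
    by blast
  \<comment> \<open>deleting \<open>Max V\<close> from \<open>V\<close> is deleting the minimum of the reflected set \<open>-V\<close>\<close>
  have "uminus ` V - {Min (uminus ` V)} = uminus ` (V - {Max V})"
    using Min_uminus_image[OF assms(2) ne] by auto
  moreover have "\<not> optimal_AP 3 (uminus ` (V - {Max V}))"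
    using neither by (simp add: optimal_AP_uminus_image_iff)
  moreover have "(Min (uminus ` V) + Max (uminus ` V)) / 2 = - m"
    using Min_uminus_image[OF assms(2) ne] Max_uminus_image[OF assms(2) ne]
    by (simp add: m_def field_simps)
  ultimately have "card (elems_above (uminus ` V) (- m)) < card (elems_below (uminus ` V) (- m))"
    using more_below_midpoint_if_not_optimal_Diff_Min[OF optimal_AP_uminus_image[OF assms(4)]] ne
    by (metis image_is_empty)
  then have "card (elems_below V m) < card (elems_above V m)"
    by (simp add: card_elems_above_uminus_image card_elems_below_uminus_image)
  with more_below show False by simp
qed

end
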